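(* Let $\mathbf K$ be a commutative field, $p\in\mathbb N$, and $\alpha:\mathcal M_p\to\mathbf K$. Then $\alpha$ is an automatic function (with input alphabet $\{0,\dots,p-1\}$ and output alphabet $\mathbf K$) if and only if $\alpha\in\mathrm{Rec}_p(\mathbf K)$ and the shift-monoid of $\alpha$ is finite.
   Context: $\mathcal M_p$ is the free monoid of words over $\{0,\dots,p-1\}$. For $A:\mathcal M_p\to\mathbf K$ and $S\in\mathcal M_p$, $(\rho(S)A)[U]=A[US]$. $\mathrm{Rec}_p(\mathbf K)$ is the set of $A$ whose span $\overline{A}^{rec}$ of $\{\rho(S)A:S\in\mathcal M_p\}$ is finite-dimensional, and the shift-monoid of $A$ is the set of restrictions of the maps $\rho(S)$ to $\overline{A}^{rec}$. An initial automaton with input alphabet $X$ and output alphabet $Y$ consists of a set $\mathcal V$ of states, an initial state $v_*\in\mathcal V$, a transition function $\delta:\mathcal V\times X\to\mathcal V$ and an output function $w:\mathcal V\to Y$; it defines $\alpha:\mathcal M_X\to Y$ by $\alpha(x_1\dots x_n)=w(v)$ where $v$ is reached from $v_*$ by successively applying $\delta(\cdot,x_1),\dots,\delta(\cdot,x_n)$. It is finite-state if $X$ and $\mathcal V$ are finite. A function $\mathcal M_X\to Y$ is automatic if it is defined by some finite-state initial automaton. *)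

theory Defs
  imports Complex_Main "HOL-Library.FuncSet" "HOL-Library.Function_Algebras"
begin

text \<open>Words of M_p are lists over {0..p-1}, i.e. elements of lists {..<p}.
 Functions M_p -> K are represented as nat list => 'k; values outside M_p are
 irrelevant (the shift operator below sets them to 0).\<close>

definition fscale :: "'k::field \<Rightarrow> (nat list \<Rightarrow> 'k) \<Rightarrow> (nat list \<Rightarrow> 'k)" where
  "fscale c f = (\<lambda>U. c * f U)"

definition rho :: "nat \<Rightarrow> nat list \<Rightarrow> (nat list \<Rightarrow> 'k::field) \<Rightarrow> (nat list \<Rightarrow> 'k)" where
  "rho p S A = (\<lambda>U. if U \<in> lists {..<p} then A (U @ S) else 0)"

definition shift_orbit :: "nat \<Rightarrow> (nat list \<Rightarrow> 'k::field) \<Rightarrow> (nat list \<Rightarrow> 'k) set" where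
  "shift_orbit p A = {rho p S A | S. S \<in> lists {..<p}}"

definition rec_closure :: "nat \<Rightarrow> (nat list \<Rightarrow> 'k::field) \<Rightarrow> (nat list \<Rightarrow> 'k) set" where
  "rec_closure p A = module.span fscale (shift_orbit p A)"

definition Rec :: "nat \<Rightarrow> (nat list \<Rightarrow> 'k::field) set" where
  "Rec p = {A. \<exists>B. finite B \<and> rec_closure p A = module.span fscale B}"

definition shift_monoid :: "nat \<Rightarrow> (nat list \<Rightarrow> 'k::field)
     \<Rightarrow> ((nat list \<Rightarrow> 'k) \<Rightarrow> (nat list \<Rightarrow> 'k)) set" where
  "shift_monoid p A = {restrict (rho p S) (rec_closure p A) | S. S \<in> lists {..<p}}"

text \<open>Automatic: computed by a finite-state initial automaton with input alphabet
 {0..p-1}; states are (w.l.o.g.) natural numbers forming a finite set V.\<close>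
definition automatic :: "nat \<Rightarrow> (nat list \<Rightarrow> 'y) \<Rightarrow> bool" where
  "automatic p \<alpha> \<longleftrightarrow>
     (\<exists>(V::nat set) v0 (\<delta>::nat \<Rightarrow> nat \<Rightarrow> nat) (w::nat \<Rightarrow> 'y).
        finite V \<and> v0 \<in> V \<and> (\<forall>v\<in>V. \<forall>x<p. \<delta> v x \<in> V) \<and>
        (\<forall>u\<in>lists {..<p}. \<alpha> u = w (fold (\<lambda>x v. \<delta> v x) u v0)))"

end

theory Submission
  imports Defs
begin

(* An automaton with state set V makes rho(S) alpha depend only on the map V -> V induced by
   the word S, so the orbit {rho(S) alpha} is finite. A finite orbit spans a finite-dimensional
   space, and each rho(S), restricted to this span, is determined by the map it induces on
   the orbit; hence the shift monoid is finite. Conversely, since rho(S x) = rho(S) o rho(x)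
   and rho(x) preserves the span, S |-> rho(S) restricted to the span is a right congruence of
   finite index, and alpha(S) = (rho(S) (rho([]) alpha))([]) is read off from it: the shift
   monoid itself is the state set of an automaton for alpha. (This direction does not need
   alpha to be in Rec p.) *)

lemma finite_image_if_factors:
  assumes "finite (g ` A)" and "\<And>a b. a \<in> A \<Longrightarrow> b \<in> A \<Longrightarrow> g a = g b \<Longrightarrow> f a = f b"
  shows "finite (f ` A)"
proof -
  have "f a = f (inv_into A g (g a))" if "a \<in> A" for a
    using that by (intro assms(2)) (simp_all add: inv_into_into f_inv_into_f)
  then have "f ` A = (\<lambda>y. f (inv_into A g y)) ` g ` A"
    by (simp add: image_image)
  then show ?thesis using assms(1) by simp
qed

lemma automaticI:
  fixes Q :: "'q set"
  assumes "finite Q" "init \<in> Q" "\<And>q x. q \<in> Q \<Longrightarrow> x < p \<Longrightarrow> d q x \<in> Q"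
    and "\<And>u. u \<in> lists {..<p} \<Longrightarrow> \<alpha> u = out (fold (\<lambda>x q. d q x) u init)"
  shows "automatic p \<alpha>"
proof -
  obtain e where e: "bij_betw e Q {0..<card Q}"
    using ex_bij_betw_finite_nat[OF assms(1)] by blast
  define \<delta> where "\<delta> = (\<lambda>v x. e (d (inv_into Q e v) x))"
  have inv_e: "q \<in> Q \<Longrightarrow> inv_into Q e (e q) = q" for q
    using e by (simp add: bij_betw_def)
  have fold_in_Q: "fold (\<lambda>x q. d q x) u q \<in> Q" if "u \<in> lists {..<p}" "q \<in> Q" for u q
    using that by (induction u arbitrary: q) (auto simp: assms(3))
  have fold_\<delta>: "fold (\<lambda>x v. \<delta> v x) u (e q) = e (fold (\<lambda>x q. d q x) u q)"
    if "u \<in> lists {..<p}" "q \<in> Q" for u q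
    using that by (induction u arbitrary: q) (auto simp: \<delta>_def inv_e assms(3))
  show ?thesis
    unfolding automatic_def
  proof (intro exI conjI ballI allI impI)
    show "e init \<in> {0..<card Q}" using e assms(2) by (auto simp: bij_betw_def)
    show "\<delta> v x \<in> {0..<card Q}" if "v \<in> {0..<card Q}" "x < p" for v x
      using that e assms(3) bij_betw_inv_into[OF e] unfolding \<delta>_def bij_betw_def by blast
    show "\<alpha> u = (\<lambda>v. out (inv_into Q e v)) (fold (\<lambda>x v. \<delta> v x) u (e init))"
      if "u \<in> lists {..<p}" for u
      using that by (simp add: fold_\<delta> assms(2,4) inv_e fold_in_Q)
  qed simp
qed

lemma automatic_if_finite_right_congruence:
  assumes "finite (h ` lists {..<p})"
    and snoc_cong: "\<And>S T x. S \<in> lists {..<p} \<Longrightarrow> T \<in> lists {..<p} \<Longrightarrow> x < p \<Longrightarrow>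
      h S = h T \<Longrightarrow> h (S @ [x]) = h (T @ [x])"
    and output_cong: "\<And>S T. S \<in> lists {..<p} \<Longrightarrow> T \<in> lists {..<p} \<Longrightarrow>
      h S = h T \<Longrightarrow> \<alpha> S = \<alpha> T"
  shows "automatic p \<alpha>"
proof -
  define rep where "rep q = inv_into (lists {..<p}) h q" for q
  have rep: "rep (h S) \<in> lists {..<p}" "h (rep (h S)) = h S" if "S \<in> lists {..<p}" for S
    using that by (simp_all add: rep_def inv_into_into f_inv_into_f)
  define d where "d q x = h (rep q @ [x])" for q x
  have run: "fold (\<lambda>x q. d q x) u (h []) = h u" if "u \<in> lists {..<p}" for u
    using that
  proof (induction u rule: rev_induct)
    case (snoc x u)
    then have u: "u \<in> lists {..<p}" and "x < p" by simp_all
    have "fold (\<lambda>x q. d q x) (u @ [x]) (h []) = h (rep (h u) @ [x])"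
      using snoc.IH u by (simp add: d_def)
    also have "\<dots> = h (u @ [x])"
      using snoc_cong[OF rep(1)[OF u] u \<open>x < p\<close> rep(2)[OF u]] .
    finally show ?case .
  qed simp
  show ?thesis
  proof (rule automaticI[where Q = "h ` lists {..<p}" and init = "h []" and d = d
        and out = "\<lambda>q. \<alpha> (rep q)"])
    show "finite (h ` lists {..<p})" by (fact assms(1))
    show "h [] \<in> h ` lists {..<p}" by (intro imageI lists.Nil)
    show "d q x \<in> h ` lists {..<p}" if "q \<in> h ` lists {..<p}" "x < p" for q x
    proof -
      from that(1) obtain S where S: "S \<in> lists {..<p}" and q: "q = h S" by (rule imageE)
      have "rep q @ [x] \<in> lists {..<p}" using rep(1)[OF S] that(2) unfolding q by simp
      then show ?thesis unfolding d_def by (rule imageI)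
    qed
    show "\<alpha> u = \<alpha> (rep (fold (\<lambda>x q. d q x) u (h [])))" if "u \<in> lists {..<p}" for u
      unfolding run[OF that] using output_cong[OF that rep(1)[OF that] rep(2)[OF that, symmetric]] .
  qed
qed

lemma module_fscale: "module (fscale :: 'k::field \<Rightarrow> (nat list \<Rightarrow> 'k) \<Rightarrow> _)"
  by unfold_locales (auto simp: fscale_def fun_eq_iff algebra_simps)

lemma module_hom_rho: "module_hom fscale fscale (rho p S :: (nat list \<Rightarrow> 'k::field) \<Rightarrow> _)"
  unfolding module_hom_iff using module_fscale by (auto simp: rho_def fscale_def fun_eq_iff)

lemma rho_append: "S \<in> lists {..<p} \<Longrightarrow> rho p S (rho p T A) = rho p (S @ T) A"
  by (auto simp: rho_def fun_eq_iff)

lemma rho_apply_Nil: "S \<in> lists {..<p} \<Longrightarrow> rho p S A [] = A S"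
  by (simp add: rho_def)

lemma shift_orbit_eq_image: "shift_orbit p A = (\<lambda>S. rho p S A) ` lists {..<p}"
  by (auto simp: shift_orbit_def)

lemma shift_monoid_eq_image:
  "shift_monoid p A = (\<lambda>S. restrict (rho p S) (rec_closure p A)) ` lists {..<p}"
  by (auto simp: shift_monoid_def)

lemma shift_orbit_subset_rec_closure: "shift_orbit p A \<subseteq> rec_closure p A"
  unfolding rec_closure_def by (rule module.span_superset[OF module_fscale])

lemma rho_shift_orbit:
  assumes "S \<in> lists {..<p}"
  shows "rho p S ` shift_orbit p A \<subseteq> shift_orbit p A"
proof
  fix g assume "g \<in> rho p S ` shift_orbit p A"
  then obtain T where T: "T \<in> lists {..<p}" "g = rho p S (rho p T A)"
    unfolding shift_orbit_eq_image by blast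
  then have "g = rho p (S @ T) A" and "S @ T \<in> lists {..<p}"
    using assms by (simp_all add: rho_append)
  then show "g \<in> shift_orbit p A"
    unfolding shift_orbit_eq_image by blast
qed

lemma rho_rec_closure:
  assumes "S \<in> lists {..<p}" "f \<in> rec_closure p A"
  shows "rho p S f \<in> rec_closure p A"
proof -
  have "rho p S ` rec_closure p A = module.span fscale (rho p S ` shift_orbit p A)"
    unfolding rec_closure_def by (rule module_hom.span_image[OF module_hom_rho, symmetric])
  also have "\<dots> \<subseteq> rec_closure p A"
    unfolding rec_closure_def by (rule module.span_mono[OF module_fscale rho_shift_orbit[OF assms(1)]])
  finally show ?thesis using assms(2) by (rule subsetD[OF _ imageI])
qed

lemma rho_eq_on_span:
  assumes "\<And>g. g \<in> G \<Longrightarrow> rho p S g = rho p T g" "f \<in> module.span fscale G"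
  shows "rho p S f = rho p T (f :: nat list \<Rightarrow> 'k::field)"
proof (rule module_pair.module_hom_eq_on_span[OF _ module_hom_rho module_hom_rho assms])
  show "module_pair fscale (fscale :: 'k \<Rightarrow> (nat list \<Rightarrow> 'k) \<Rightarrow> _)"
    unfolding module_pair_def using module_fscale by blast
qed

lemma finite_shift_orbit_if_automatic:
  assumes "automatic p \<alpha>"
  shows "finite (shift_orbit p \<alpha>)"
proof -
  obtain V v0 \<delta> w
    where V: "finite V" "v0 \<in> V" "\<forall>v\<in>V. \<forall>x<p. (\<delta> :: nat \<Rightarrow> nat \<Rightarrow> nat) v x \<in> V"
    and \<alpha>: "\<forall>u\<in>lists {..<p}. \<alpha> u = w (fold (\<lambda>x v. \<delta> v x) u v0)"
    using assms unfolding automatic_def by blast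
  define run where "run S = restrict (fold (\<lambda>x v. \<delta> v x) S) V" for S
  have run_in: "fold (\<lambda>x v. \<delta> v x) S v \<in> V" if "S \<in> lists {..<p}" "v \<in> V" for S v
    using that V(3) by (induction S arbitrary: v) auto
  have "run ` lists {..<p} \<subseteq> V \<rightarrow>\<^sub>E V"
    by (intro image_subsetI) (simp add: run_def run_in)
  then have "finite (run ` lists {..<p})"
    by (rule finite_subset) (simp add: finite_PiE V(1))
  moreover have "rho p S \<alpha> = rho p T \<alpha>"
    if "S \<in> lists {..<p}" "T \<in> lists {..<p}" "run S = run T" for S T
  proof
    fix U
    show "rho p S \<alpha> U = rho p T \<alpha> U"
    proof (cases "U \<in> lists {..<p}")
      case True
      have "fold (\<lambda>x v. \<delta> v x) S (fold (\<lambda>x v. \<delta> v x) U v0)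
          = fold (\<lambda>x v. \<delta> v x) T (fold (\<lambda>x v. \<delta> v x) U v0)"
        using that(3) run_in[OF True V(2)] unfolding run_def by (metis restrict_apply')
      then show ?thesis
        using True that by (simp add: rho_def \<alpha>)
    qed (simp add: rho_def)
  qed
  ultimately show ?thesis
    unfolding shift_orbit_eq_image by (rule finite_image_if_factors)
qed

lemma Rec_if_finite_shift_orbit: "finite (shift_orbit p A) \<Longrightarrow> A \<in> Rec p"
  unfolding Rec_def rec_closure_def by (intro CollectI exI[of _ "shift_orbit p A"] conjI refl)

lemma finite_shift_monoid_if_finite_shift_orbit:
  assumes "finite (shift_orbit p A)"
  shows "finite (shift_monoid p A)"
proof -
  define Orb where "Orb = shift_orbit p A"
  have "(\<lambda>S. restrict (rho p S) Orb) ` lists {..<p} \<subseteq> Orb \<rightarrow>\<^sub>E Orb"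
    using rho_shift_orbit by (fastforce simp: Orb_def)
  then have "finite ((\<lambda>S. restrict (rho p S) Orb) ` lists {..<p})"
    by (rule finite_subset) (simp add: finite_PiE assms Orb_def)
  moreover have "restrict (rho p S) (rec_closure p A) = restrict (rho p T) (rec_closure p A)"
    if "restrict (rho p S) Orb = restrict (rho p T) Orb" for S T
    using rho_eq_on_span[of Orb p S T] that
    unfolding Orb_def rec_closure_def by (metis restrict_apply' restrict_ext)
  ultimately show ?thesis
    unfolding shift_monoid_eq_image by (rule finite_image_if_factors)
qed

lemma automatic_if_finite_shift_monoid:
  assumes "finite (shift_monoid p \<alpha>)"
  shows "automatic p \<alpha>"
proof -
  define C where "C = rec_closure p \<alpha>"
  define h where "h S = restrict (rho p S) C" for S
  have rho_eq: "rho p S f = rho p T f" if "h S = h T" "f \<in> C" for S T f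
    using that unfolding h_def by (metis restrict_apply')
  show ?thesis
  proof (rule automatic_if_finite_right_congruence)
    show "finite (h ` lists {..<p})"
      using assms unfolding shift_monoid_eq_image h_def C_def .
  next
    fix S T x assume S: "S \<in> lists {..<p}" and T: "T \<in> lists {..<p}" and "x < p" "h S = h T"
    have "rho p (S @ [x]) f = rho p (T @ [x]) f" if "f \<in> C" for f
    proof -
      have "rho p [x] f \<in> C"
        using \<open>x < p\<close> rho_rec_closure[of "[x]" p f \<alpha>] that by (simp add: C_def)
      then show ?thesis
        using rho_eq[OF \<open>h S = h T\<close>] by (simp flip: rho_append[OF S] rho_append[OF T])
    qed
    then show "h (S @ [x]) = h (T @ [x])"
      unfolding h_def by (rule restrict_ext)
  next
    fix S T assume S: "S \<in> lists {..<p}" and T: "T \<in> lists {..<p}" and "h S = h T"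
    have "rho p [] \<alpha> \<in> C"
      using shift_orbit_subset_rec_closure unfolding C_def shift_orbit_eq_image by blast
    then have "rho p S (rho p [] \<alpha>) [] = rho p T (rho p [] \<alpha>) []"
      using rho_eq[OF \<open>h S = h T\<close>] by simp
    then show "\<alpha> S = \<alpha> T"
      by (simp add: rho_append[OF S] rho_append[OF T] rho_apply_Nil[OF S] rho_apply_Nil[OF T])
  qed
qed

theorem mainTheorem17:
  fixes p :: nat and \<alpha> :: "nat list \<Rightarrow> 'k::field"
  shows "automatic p \<alpha> \<longleftrightarrow> \<alpha> \<in> Rec p \<and> finite (shift_monoid p \<alpha>)"
proof
  assume "automatic p \<alpha>"
  then have "finite (shift_orbit p \<alpha>)"
    by (rule finite_shift_orbit_if_automatic)
  then show "\<alpha> \<in> Rec p \<and> finite (shift_monoid p \<alpha>)"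
    by (simp add: Rec_if_finite_shift_orbit finite_shift_monoid_if_finite_shift_orbit)
next
  assume "\<alpha> \<in> Rec p \<and> finite (shift_monoid p \<alpha>)"
  then show "automatic p \<alpha>"
    by (simp add: automatic_if_finite_shift_monoid)
qed

end
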